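(* Let $r\ge 2$ and let $f, s_1,\dots,s_r$ be functions (or distributions) on $\mathbb{R}$, and set $g_i=s_i f$ for $i=1,\dots,r$. Let $\mathrm{L}=\frac{d}{dx}$ with Fourier symbol $\hat l(\omega)=i\omega$, and let $\hat f,\hat s_i,\hat g_i$ denote Fourier transforms. Assume we are in a setting in which all convolutions below are well defined, commutative and associative, and in which the Fourier transform of the Leibniz rule $\mathrm{L}g_i=s_i\,\mathrm{L}f+f\,\mathrm{L}s_i$ reads $$\hat l(\omega)\hat g_i(\omega)=\hat s_i(\omega)\ast\big(\hat l(\omega)\hat f(\omega)\big)+\hat f(\omega)\ast\big(\hat l(\omega)\hat s_i(\omega)\big),\qquad i=1,\dots,r.$$ Suppose $\hat h$ is an annihilating filter for $\hat f$, i.e. $(\hat h\ast\hat f)(\omega)=0$. Then for all $i\neq j$ in $\{1,\dots,r\}$, $$\hat h(\omega)\ast\hat s_j(\omega)\ast\big(\hat l(\omega)\hat g_i(\omega)\big)-\hat h(\omega)\ast\hat s_i(\omega)\ast\big(\hat l(\omega)\hat g_j(\omega)\big)=0 .$$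
   Context: Parallel MRI model: $f$ is the unknown image, $s_i$ is the sensitivity map of the $i$-th receiver coil, and $g_i=s_if$ is the image seen by coil $i$; $\ast$ denotes convolution in the frequency variable $\omega$. (Constant normalization factors of the convolution theorem are suppressed as in the paper; they do not affect the conclusion.) *)

theory Defs
  imports Complex_Main "HOL-Library.Function_Algebras"
begin

definition lhat :: "real \<Rightarrow> complex" where
  "lhat w = \<i> * complex_of_real w"

definition lmul :: "(real \<Rightarrow> complex) \<Rightarrow> (real \<Rightarrow> complex)" where
  "lmul u = (\<lambda>w. lhat w * u w)"

end

theory Submission
  imports Defs
begin

text \<open>Substituting the Leibniz rule for coil i, the term carrying the convolution factor
  fh is killed by the annihilating filter, leaving hh * s_j * s_i * (L f).  This expression
  is symmetric in i and j because convolution is commutative and associative, so the two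
  cross terms cancel.\<close>

locale convolution =
  fixes conv :: "'a::ab_group_add \<Rightarrow> 'a \<Rightarrow> 'a"
  assumes conv_commute: "conv a b = conv b a"
    and conv_assoc: "conv (conv a b) c = conv a (conv b c)"
    and conv_add_left: "conv (a + b) c = conv a c + conv b c"
begin

lemma conv_add_right: "conv a (b + c) = conv a b + conv a c"
  using conv_add_left[of b c a] by (simp add: conv_commute)

lemma conv_zero_left [simp]: "conv 0 c = 0"
  using conv_add_left[of 0 0 c] by simp

lemma conv_left_commute: "conv a (conv b c) = conv b (conv a c)"
  by (metis conv_assoc conv_commute)

lemma conv_annihilated:
  assumes "conv h f = 0"
  shows "conv (conv h s) (conv f d) = 0"
proof -
  have "conv (conv h s) (conv f d) = conv (conv (conv h f) s) d"
    by (metis conv_assoc conv_commute)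
  with assms show ?thesis by simp
qed

lemma conv_leibniz_annihilated:
  assumes "conv h f = 0" and "g = conv s' F + conv f d"
  shows "conv (conv h s) g = conv h (conv s (conv s' F))"
  using assms conv_annihilated[OF assms(1)] by (simp add: conv_add_right conv_assoc)

lemma cross_relation:
  assumes "conv h f = 0"
    and "g = conv s F + conv f d" and "g' = conv s' F + conv f d'"
  shows "conv (conv h s') g - conv (conv h s) g' = 0"
  using conv_leibniz_annihilated[OF assms(1,2), of s']
    conv_leibniz_annihilated[OF assms(1,3), of s]
  by (simp add: conv_left_commute[of s s'])

end

theorem lemma1:
  fixes conv :: "(real \<Rightarrow> complex) \<Rightarrow> (real \<Rightarrow> complex) \<Rightarrow> (real \<Rightarrow> complex)"
    and fh hh :: "real \<Rightarrow> complex"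
    and sh gh :: "nat \<Rightarrow> real \<Rightarrow> complex"
    and r :: nat
  assumes r: "r \<ge> 2"
    and conv_comm: "\<And>a b. conv a b = conv b a"
    and conv_assoc: "\<And>a b c. conv (conv a b) c = conv a (conv b c)"
    and conv_add: "\<And>a b c. conv (a + b) c = conv a c + conv b c"
    and leibniz: "\<And>i. i \<in> {1..r} \<Longrightarrow>
        lmul (gh i) = conv (sh i) (lmul fh) + conv fh (lmul (sh i))"
    and annih: "conv hh fh = (\<lambda>_. 0)"
  shows "\<forall>i\<in>{1..r}. \<forall>j\<in>{1..r}. i \<noteq> j \<longrightarrow>
      conv (conv hh (sh j)) (lmul (gh i)) - conv (conv hh (sh i)) (lmul (gh j)) = (\<lambda>_. 0)"
proof (intro ballI impI)
  interpret convolution conv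
    by unfold_locales (fact conv_comm conv_assoc conv_add)+
  fix i j assume "i \<in> {1..r}" "j \<in> {1..r}"
  then show "conv (conv hh (sh j)) (lmul (gh i)) - conv (conv hh (sh i)) (lmul (gh j)) = (\<lambda>_. 0)"
    using cross_relation[of hh fh, OF _ leibniz leibniz] annih
    by (simp add: zero_fun_def)
qed

end
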